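(* Fix $n\in\mathbb N$ and let $c^1\to c^2\to\dots\to c^k$ be a sequence of PSSPM transitions between configurations reachable in PSSPM from $(\underline{n})$. Suppose there is a column $i$ such that (1) for all $1\le t\le k$, $c^t_i=\max_j c^t_j$, and (2) $c^1_i\le c^1_{i+1}+2$. Then for all $1\le t\le k$, $c^t_i\le c^t_{i+1}+2$. Symmetrically, if (1) holds and $c^1_{i-1}+2\ge c^1_i$, then for all $1\le t\le k$, $c^t_{i-1}+2\ge c^t_i$.
   Context: A configuration is a sequence $(c_i)_{i\in\mathbb Z}$ of nonnegative integers with only finitely many positive values; $(\underline{n})$ denotes the configuration with $c_0=n$ and $c_i=0$ otherwise. Rule $\mathcal L$ at column $i$ is applicable if $c_{i-1}+2\le c_i$ and moves one grain from column $i$ to column $i-1$; rule $\mathcal R$ at column $i$ is applicable if $c_i\ge c_{i+1}+2$ and moves one grain from column $i$ to column $i+1$. A PSSPM transition $c\to c'$ applies rules simultaneously on every column where some rule is applicable, at most one rule per column (when both are applicable on a column, one is chosen). A configuration is reachable in PSSPM from $(\underline{n})$ if obtained from it by finitely many PSSPM transitions. *)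

theory Defs
  imports Main
begin

type_synonym config = "int \<Rightarrow> nat"

definition is_config :: "config \<Rightarrow> bool" where
  "is_config c \<longleftrightarrow> finite {i. c i > 0}"

definition single :: "nat \<Rightarrow> config" where
  "single n = (\<lambda>i. if i = 0 then n else 0)"

datatype rule = NoRule | RuleL | RuleR

definition L_applicable :: "config \<Rightarrow> int \<Rightarrow> bool" where
  "L_applicable c i \<longleftrightarrow> c (i - 1) + 2 \<le> c i"

definition R_applicable :: "config \<Rightarrow> int \<Rightarrow> bool" where
  "R_applicable c i \<longleftrightarrow> c i \<ge> c (i + 1) + 2"

definition valid_choice :: "config \<Rightarrow> (int \<Rightarrow> rule) \<Rightarrow> bool" where
  "valid_choice c r \<longleftrightarrow>
     (\<forall>i. (r i = RuleL \<longrightarrow> L_applicable c i) \<and>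
          (r i = RuleR \<longrightarrow> R_applicable c i) \<and>
          (r i = NoRule \<longleftrightarrow> \<not> L_applicable c i \<and> \<not> R_applicable c i))"

definition apply_choice :: "config \<Rightarrow> (int \<Rightarrow> rule) \<Rightarrow> config" where
  "apply_choice c r = (\<lambda>i. c i - (if r i = NoRule then 0 else 1)
                          + (if r (i + 1) = RuleL then 1 else 0)
                          + (if r (i - 1) = RuleR then 1 else 0))"

definition psspm_step :: "config \<Rightarrow> config \<Rightarrow> bool" where
  "psspm_step c c' \<longleftrightarrow> (\<exists>r. valid_choice c r \<and> c' = apply_choice c r)"

definition psspm_reachable :: "nat \<Rightarrow> config \<Rightarrow> bool" where
  "psspm_reachable n c \<longleftrightarrow> psspm_step\<^sup>*\<^sup>* (single n) c"

end

theory Submission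
  imports Defs
begin

text \<open>Suppose column \<open>i\<close> receives no grain from its left neighbour. When \<open>i\<close> fires to the
  right the gap \<open>c i - c (i + 1)\<close> shrinks; when it fires to the left \<open>c i\<close> loses a grain
  and \<open>c (i + 1)\<close> at most one; when it does not fire the gap is at most 1 and \<open>c (i + 1)\<close>
  loses at most one grain. Column \<open>i\<close> can only gain a grain from \<open>i + 1\<close>, which then lies
  at least two above it. So \<open>c i \<le> c (i + 1) + 2\<close> is invariant along a run. A column
  holding the maximum never receives a grain from the left, and the bound towards the left
  neighbour is the mirror image of the one towards the right, obtained by reflecting
  configurations at the origin.\<close>

lemma valid_choice_RuleL: "valid_choice c r \<Longrightarrow> r i = RuleL \<Longrightarrow> L_applicable c i"
  unfolding valid_choice_def by blast

lemma valid_choice_RuleR: "valid_choice c r \<Longrightarrow> r i = RuleR \<Longrightarrow> R_applicable c i"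
  unfolding valid_choice_def by blast

lemma valid_choice_NoRule:
  "valid_choice c r \<Longrightarrow> r i = NoRule \<longleftrightarrow> \<not> L_applicable c i \<and> \<not> R_applicable c i"
  unfolding valid_choice_def by blast

lemma psspm_step_preserves_is_config:
  assumes "psspm_step c c'" and "is_config c"
  shows "is_config c'"
proof -
  obtain r where v: "valid_choice c r" and c': "c' = apply_choice c r"
    using assms(1) unfolding psspm_step_def by blast
  let ?S = "{i. c i > 0}"
  have "{i. c' i > 0} \<subseteq> ?S \<union> (\<lambda>j. j - 1) ` ?S \<union> (\<lambda>j. j + 1) ` ?S"
  proof
    fix i assume "i \<in> {i. c' i > 0}"
    then have "c i > 0 \<or> r (i + 1) = RuleL \<or> r (i - 1) = RuleR"
      unfolding c' apply_choice_def by (auto split: if_splits)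
    moreover have "r (i + 1) = RuleL \<Longrightarrow> c (i + 1) > 0" "r (i - 1) = RuleR \<Longrightarrow> c (i - 1) > 0"
      using valid_choice_RuleL[OF v, of "i + 1"] valid_choice_RuleR[OF v, of "i - 1"]
      unfolding L_applicable_def R_applicable_def by auto
    ultimately show "i \<in> ?S \<union> (\<lambda>j. j - 1) ` ?S \<union> (\<lambda>j. j + 1) ` ?S"
      by (auto intro: image_eqI[where x = "i + 1"] image_eqI[where x = "i - 1"])
  qed
  with assms(2) show ?thesis
    unfolding is_config_def by (meson finite_Un finite_imageI finite_subset)
qed

lemma psspm_reachable_is_config:
  assumes "psspm_reachable n c"
  shows "is_config c"
  using assms unfolding psspm_reachable_def
proof induction
  case base
  have "{i. single n i > 0} \<subseteq> {0}" unfolding single_def by auto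
  then show ?case unfolding is_config_def using finite_subset by blast
next
  case (step c c')
  then show ?case using psspm_step_preserves_is_config by blast
qed

lemma is_config_finite_range:
  assumes "is_config c"
  shows "finite (range c)"
proof -
  have "range c \<subseteq> insert 0 (c ` {i. c i > 0})" by auto
  with assms show ?thesis unfolding is_config_def using finite_subset by blast
qed

lemma apply_choice_preserves_right_gap:
  assumes v: "valid_choice c r" and no_inflow: "c (i - 1) \<le> c i"
    and gap: "c i \<le> c (i + 1) + 2"
  shows "apply_choice c r i \<le> apply_choice c r (i + 1) + 2"
proof -
  have "r (i - 1) \<noteq> RuleR"
    using valid_choice_RuleR[OF v, of "i - 1"] no_inflow unfolding R_applicable_def by auto
  then have new_i: "apply_choice c r i
      = c i - (if r i = NoRule then 0 else 1) + (if r (i + 1) = RuleL then 1 else 0)"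
    unfolding apply_choice_def by simp
  have new_succ: "c (i + 1) + (if r i = RuleR then 1 else 0) \<le> apply_choice c r (i + 1) + 1"
    unfolding apply_choice_def by auto
  have fire_L: "r (i + 1) = RuleL \<Longrightarrow> c i + 2 \<le> c (i + 1)"
    using valid_choice_RuleL[OF v, of "i + 1"] unfolding L_applicable_def by simp
  show ?thesis
  proof (cases "r i")
    case NoRule
    then have "c i < c (i + 1) + 2"
      using valid_choice_NoRule[OF v] unfolding R_applicable_def by simp
    with NoRule new_i new_succ fire_L show ?thesis by auto
  next
    case RuleL
    with new_i new_succ fire_L gap show ?thesis by auto
  next
    case RuleR
    then have "c (i + 1) + 2 \<le> c i"
      using valid_choice_RuleR[OF v] unfolding R_applicable_def by simp
    with RuleR new_i new_succ fire_L gap show ?thesis by auto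
  qed
qed

lemma psspm_step_preserves_right_gap:
  assumes "psspm_step c c'" and "c (i - 1) \<le> c i" and "c i \<le> c (i + 1) + 2"
  shows "c' i \<le> c' (i + 1) + 2"
  using assms apply_choice_preserves_right_gap unfolding psspm_step_def by blast

lemma psspm_run_preserves_right_gap:
  assumes steps: "\<And>t. 1 \<le> t \<Longrightarrow> t < k \<Longrightarrow> psspm_step (c t) (c (Suc t))"
    and no_inflow: "\<And>t. 1 \<le> t \<Longrightarrow> t \<le> k \<Longrightarrow> c t (i - 1) \<le> c t i"
    and gap: "c 1 i \<le> c 1 (i + 1) + 2"
    and t: "1 \<le> t" "t \<le> k"
  shows "c t i \<le> c t (i + 1) + 2"
  using t(1)
proof (induction t rule: dec_induct)
  case base
  from gap show ?case .
next
  case (step m)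
  then have "1 \<le> m" "m < k" using t(2) by simp_all
  with step.IH show ?case
    by (intro psspm_step_preserves_right_gap[OF steps no_inflow]) simp_all
qed

definition reflect :: "config \<Rightarrow> config" where
  "reflect c = (\<lambda>i. c (- i))"

fun mirror_rule :: "rule \<Rightarrow> rule" where
  "mirror_rule NoRule = NoRule"
| "mirror_rule RuleL = RuleR"
| "mirror_rule RuleR = RuleL"

lemma mirror_rule_eq_iff [simp]:
  "mirror_rule x = NoRule \<longleftrightarrow> x = NoRule"
  "mirror_rule x = RuleL \<longleftrightarrow> x = RuleR"
  "mirror_rule x = RuleR \<longleftrightarrow> x = RuleL"
  by (cases x; simp)+

lemma L_applicable_reflect: "L_applicable (reflect c) i \<longleftrightarrow> R_applicable c (- i)"
  unfolding L_applicable_def R_applicable_def reflect_def by simp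

lemma R_applicable_reflect: "R_applicable (reflect c) i \<longleftrightarrow> L_applicable c (- i)"
proof -
  have "- (i + 1) = - i - 1" by simp
  then show ?thesis unfolding L_applicable_def R_applicable_def reflect_def by presburger
qed

lemma psspm_step_reflect:
  assumes "psspm_step c c'"
  shows "psspm_step (reflect c) (reflect c')"
proof -
  obtain r where v: "valid_choice c r" and c': "c' = apply_choice c r"
    using assms unfolding psspm_step_def by blast
  let ?r = "\<lambda>i. mirror_rule (r (- i))"
  have "valid_choice (reflect c) ?r"
    using v unfolding valid_choice_def L_applicable_reflect R_applicable_reflect
    by (simp add: conj_commute)
  moreover have "reflect c' = apply_choice (reflect c) ?r"
  proof -
    have "- (j + 1) = - j - 1" "- (j - 1) = - j + 1" for j :: int by simp_all
    then show ?thesis unfolding c' apply_choice_def reflect_def by (simp add: fun_eq_iff ac_simps)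
  qed
  ultimately show ?thesis unfolding psspm_step_def by blast
qed

theorem lemma1:
  fixes n k :: nat and c :: "nat \<Rightarrow> config" and i :: int
  assumes reach: "\<And>t. 1 \<le> t \<Longrightarrow> t \<le> k \<Longrightarrow> psspm_reachable n (c t)"
    and steps: "\<And>t. 1 \<le> t \<Longrightarrow> t < k \<Longrightarrow> psspm_step (c t) (c (Suc t))"
    and maxcol: "\<And>t. 1 \<le> t \<Longrightarrow> t \<le> k \<Longrightarrow> c t i = Max (range (c t))"
  shows "(c 1 i \<le> c 1 (i + 1) + 2 \<longrightarrow>
            (\<forall>t. 1 \<le> t \<and> t \<le> k \<longrightarrow> c t i \<le> c t (i + 1) + 2))
       \<and> (c 1 (i - 1) + 2 \<ge> c 1 i \<longrightarrow>
            (\<forall>t. 1 \<le> t \<and> t \<le> k \<longrightarrow> c t (i - 1) + 2 \<ge> c t i))"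
proof -
  have max: "c t j \<le> c t i" if "1 \<le> t" "t \<le> k" for t j
    using maxcol[OF that] is_config_finite_range[OF psspm_reachable_is_config[OF reach[OF that]]]
    by simp
  have right: "c t i \<le> c t (i + 1) + 2" if "c 1 i \<le> c 1 (i + 1) + 2" "1 \<le> t" "t \<le> k" for t
    using psspm_run_preserves_right_gap[of k c i] steps max that by blast
  have left: "c t i \<le> c t (i - 1) + 2" if "c 1 i \<le> c 1 (i - 1) + 2" "1 \<le> t" "t \<le> k" for t
    using psspm_run_preserves_right_gap[of k "\<lambda>t. reflect (c t)" "- i"]
      steps max that psspm_step_reflect
    unfolding reflect_def by (simp add: algebra_simps)
  show ?thesis using right left by auto
qed

end
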